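(* Let $(\mathbf X, A, Y)$ be random variables with joint distribution $P$, where $\mathbf X \in \mathcal X \subset \mathbb R^p$, $A$ takes values in a finite set $\mathcal A$, and $Y \in \mathbb R$. Let $p(a\mid \mathbf x)$ denote the conditional probability $\mathbf P(A=a \mid \mathbf X = \mathbf x)$, and suppose there is a positive constant $S$ with $p(a\mid \mathbf x) \ge S^{-1}$ for all $(\mathbf x, a) \in \mathcal X \times \mathcal A$. For a treatment rule $d:\mathcal X \to \mathcal A$ define its Value $$V(d) = E\left[ Y\, \frac{\mathbb 1(d(\mathbf X)=A)}{p(A\mid \mathbf X)}\right],$$ and let $d_0$ be an optimal rule, i.e. $d_0 \in \arg\max_d V(d)$ over all rules $d:\mathcal X\to\mathcal A$. Let $Q_0(\mathbf X, A) = E[Y\mid \mathbf X, A]$, assumed square integrable, and $T_0(\mathbf X, a) = Q_0(\mathbf X, a) - E[Q_0(\mathbf X, A)\mid \mathbf X]$. Assume the margin condition: there exist constants $C>0$ and $\alpha>0$ such that for every $\epsilon>0$, $$\mathbf P\Big(\max_{a\in\mathcal A} T_0(\mathbf X, a) - \max_{a \in \mathcal A\setminus \arg\max_{a} T_0(\mathbf X, a)} T_0(\mathbf X, a) \le \epsilon\Big) \le C\epsilon^{\alpha}.$$ Then for any treatment rule $d:\mathcal X\to\mathcal A$ and any square integrable function $Q:\mathcal X\times\mathcal A \to \mathbb R$ such that $d(\mathbf X) \in \arg\max_{a\in\mathcal A} Q(\mathbf X, a)$, $$V(d_0) - V(d) \le C'\left[E\big(Q(\mathbf X, A) - Q_0(\mathbf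 X, A)\big)^2\right]^{(1+\alpha)/(2+\alpha)},$$ where $C' = (2^{2+3\alpha} S^{1+\alpha} C)^{1/(2+\alpha)}$.
   Context: Treatment rules are measurable maps from covariate space to the finite treatment set. The expectation $E(Q(\mathbf X,A)-Q_0(\mathbf X,A))^2$ is taken under the distribution $P$ of $(\mathbf X, A, Y)$. *)

theory Defs
  imports "HOL-Probability.Probability"
begin

definition argmax_set :: "('a::finite \<Rightarrow> real) \<Rightarrow> 'a set" where
  "argmax_set f = {a. f a = Max (range f)}"

(* max_a f a - max_{a not in argmax f} f a ; the max over the empty set is -infinity,
   so the gap is +infinity when every treatment attains the maximum *)
definition margin_gap :: "('a::finite \<Rightarrow> real) \<Rightarrow> ereal" where
  "margin_gap f =
     (if UNIV - argmax_set f = {} then \<infinity>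
      else ereal (Max (range f) - Max (f ` (UNIV - argmax_set f))))"

definition rule_value ::
  "'w measure \<Rightarrow> ('w \<Rightarrow> 'x) \<Rightarrow> ('w \<Rightarrow> 'a) \<Rightarrow> ('w \<Rightarrow> real) \<Rightarrow> ('x \<Rightarrow> 'a \<Rightarrow> real)
     \<Rightarrow> ('x \<Rightarrow> 'a) \<Rightarrow> real" where
  "rule_value M X A Y ps d =
     (\<integral>\<omega>. Y \<omega> * (if d (X \<omega>) = A \<omega> then 1 else 0) / ps (X \<omega>) (A \<omega>) \<partial>M)"

end

(*
  Inverse propensity weighting turns the Value into V(d) = E Q0(X, d(X)), so V(d0) - V(d) is at
  most the expected regret D = max_a Q0(X,a) - Q0(X,d(X)).  As d(X) maximises Q(X,-), the regret
  satisfies D^2 <= 2 W with W = sum_a (Q - Q0)^2(X,a), and the overlap bound p(a|x) >= 1/S gives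
  E W <= S E (Q - Q0)^2(X,A).  Pointwise, either the margin of Q0(X,-) (the same as that of
  T0(X,-), which differs by a function of X only) is at most eps, and then
  D <= eta W + 1/(2 eta), or D > eps and D <= D^2/eps <= 2 W/eps.  Taking expectations and using
  the margin condition bounds the regret by eta S e + C eps^alpha/(2 eta) + 2 S e/eps, where
  e = E (Q - Q0)^2(X,A); the optimal eps and eta give the rate e^((1+alpha)/(2+alpha)).
*)

theory Submission
  imports Defs
begin

lemma margin_gap_le_iff:
  fixes f :: "'a::finite \<Rightarrow> real"
  shows "margin_gap f \<le> ereal e \<longleftrightarrow> (\<exists>b. f b < Max (range f) \<and> Max (range f) - f b \<le> e)"
proof -
  have not_argmax: "b \<notin> argmax_set f \<longleftrightarrow> f b < Max (range f)" for b
    by (auto simp: argmax_set_def order_less_le)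
  show ?thesis
  proof (cases "UNIV - argmax_set f = {}")
    case True
    then show ?thesis using not_argmax by (auto simp: margin_gap_def)
  next
    case False
    let ?N = "f ` (UNIV - argmax_set f)"
    have "Max ?N \<in> ?N" using False by (intro Max_in) auto
    then obtain b0 where b0: "b0 \<in> UNIV - argmax_set f" "f b0 = Max ?N" by auto
    have le_N: "f b \<le> Max ?N" if "f b < Max (range f)" for b
      using that not_argmax by (intro Max_ge) auto
    have "margin_gap f \<le> ereal e \<longleftrightarrow> Max (range f) - Max ?N \<le> e"
      using False by (simp add: margin_gap_def)
    also have "\<dots> \<longleftrightarrow> (\<exists>b. f b < Max (range f) \<and> Max (range f) - f b \<le> e)"
    proof
      assume "Max (range f) - Max ?N \<le> e"
      then show "\<exists>b. f b < Max (range f) \<and> Max (range f) - f b \<le> e"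
        using b0 not_argmax by (intro exI[of _ b0]) auto
    next
      assume "\<exists>b. f b < Max (range f) \<and> Max (range f) - f b \<le> e"
      then show "Max (range f) - Max ?N \<le> e"
        using le_N by force
    qed
    finally show ?thesis .
  qed
qed

lemma margin_gap_diff_const:
  fixes f :: "'a::finite \<Rightarrow> real"
  shows "margin_gap (\<lambda>a. f a - c) = margin_gap f"
proof -
  have Max_diff: "Max ((\<lambda>a. f a - c) ` N) = Max (f ` N) - c" if "N \<noteq> {}" for N :: "'a set"
    using Max_add_commute[of N f "- c"] that by simp
  then have "argmax_set (\<lambda>a. f a - c) = argmax_set f"
    by (simp add: argmax_set_def)
  then show ?thesis
    using Max_diff by (simp add: margin_gap_def)
qed

lemma regret_sq_le:
  fixes f q :: "'a::finite \<Rightarrow> real"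
  assumes "a \<in> argmax_set q"
  shows "(Max (range f) - f a)\<^sup>2 \<le> 2 * (\<Sum>b\<in>UNIV. (q b - f b)\<^sup>2)"
proof -
  have "Max (range f) \<in> range f" by (intro Max_in) auto
  then obtain a' where a': "f a' = Max (range f)" by (metis rangeE)
  show ?thesis
  proof (cases "a' = a")
    case True
    then show ?thesis using a' by (simp add: sum_nonneg)
  next
    case False
    have "f a \<le> f a'" "q a' \<le> q a"
      using assms a' by (simp_all add: argmax_set_def)
    then have "(f a' - f a)\<^sup>2 \<le> ((q a - f a) - (q a' - f a'))\<^sup>2"
      by (intro power_mono) auto
    also have "\<dots> \<le> 2 * ((q a - f a)\<^sup>2 + (q a' - f a')\<^sup>2)"
      using zero_le_power2[of "(q a - f a) + (q a' - f a')"] by (simp add: power2_eq_square algebra_simps)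
    also have "\<dots> \<le> 2 * (\<Sum>b\<in>UNIV. (q b - f b)\<^sup>2)"
      using False sum_mono2[of UNIV "{a, a'}" "\<lambda>b. (q b - f b)\<^sup>2"] by simp
    finally show ?thesis using a' by simp
  qed
qed

lemma regret_le_margin_tradeoff:
  fixes f q :: "'a::finite \<Rightarrow> real"
  assumes "a \<in> argmax_set q" and "\<epsilon> > 0" and "\<eta> > 0"
  shows "Max (range f) - f a \<le> \<eta> * (\<Sum>b\<in>UNIV. (q b - f b)\<^sup>2)
           + (if margin_gap f \<le> ereal \<epsilon> then 1 else 0) / (2 * \<eta>)
           + 2 * (\<Sum>b\<in>UNIV. (q b - f b)\<^sup>2) / \<epsilon>"
proof -
  define W where "W = (\<Sum>b\<in>UNIV. (q b - f b)\<^sup>2)"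
  define D where "D = Max (range f) - f a"
  define R where "R = (if margin_gap f \<le> ereal \<epsilon> then 1 else 0) / (2 * \<eta>)"
  have W_nonneg: "0 \<le> W" unfolding W_def by (simp add: sum_nonneg)
  then have nonneg: "0 \<le> \<eta> * W" "0 \<le> R" "0 \<le> 2 * W / \<epsilon>"
    using assms(2,3) by (simp_all add: R_def)
  have D_sq: "D\<^sup>2 \<le> 2 * W" unfolding D_def W_def using assms(1) by (rule regret_sq_le)
  consider "D \<le> 0" | "margin_gap f \<le> ereal \<epsilon>" "D > 0" | "\<epsilon> < D"
  proof (cases "D > 0")
    case True
    then have gap: "margin_gap f \<le> ereal D"
      unfolding margin_gap_le_iff D_def by auto
    show ?thesis
    proof (cases "margin_gap f \<le> ereal \<epsilon>")
      case False
      with gap have "ereal \<epsilon> < ereal D" by (meson linorder_not_le order_less_le_trans)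
      then show ?thesis using that(3) by simp
    qed (use True that(2) in blast)
  qed (use that(1) in auto)
  then have "D \<le> \<eta> * W + R + 2 * W / \<epsilon>"
  proof cases
    case 1
    then show ?thesis using nonneg by linarith
  next
    case 2
    \<comment> \<open>AM-GM\<close>
    have "D \<le> \<eta> * D\<^sup>2 / 2 + 1 / (2 * \<eta>)"
      using zero_le_power2[of "\<eta> * D - 1"] assms(3) by (simp add: field_simps power2_eq_square)
    also have "\<dots> \<le> \<eta> * W + R"
      using D_sq assms(3) 2 by (simp add: R_def)
    finally show ?thesis using nonneg by linarith
  next
    case 3
    then have "D \<le> D\<^sup>2 / \<epsilon>"
      using assms(2) by (simp add: field_simps power2_eq_square)
    also have "\<dots> \<le> 2 * W / \<epsilon>"
      using D_sq assms(2) by (simp add: divide_right_mono)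
    finally show ?thesis using nonneg by linarith
  qed
  then show ?thesis unfolding D_def W_def R_def .
qed

lemma two_plus_ln_bound:
  fixes \<alpha> :: real
  assumes "\<alpha> > 0"
  shows "(2 + \<alpha>) * ln (2 + \<alpha>) - \<alpha> * ln \<alpha> \<le> (3 + 2 * \<alpha>) * ln 2"
proof -
  \<comment> \<open>\<open>ln x \<le> x - 1\<close> at \<open>x = (2 + \<alpha>) / (4 \<alpha>)\<close> and at \<open>x = 3 (2 + \<alpha>) / 8\<close>; the linear terms cancel.\<close>
  have ln4: "ln 4 = 2 * ln (2::real)" and ln8: "ln 8 = 3 * ln (2::real)"
    using ln_realpow[of 2 2] ln_realpow[of 2 3] by simp_all
  have "ln ((2 + \<alpha>) / (4 * \<alpha>)) \<le> (2 + \<alpha>) / (4 * \<alpha>) - 1"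
    using assms by (intro ln_le_minus_one) simp
  then have "\<alpha> * (ln (2 + \<alpha>) - 2 * ln 2 - ln \<alpha>) \<le> \<alpha> * ((2 + \<alpha>) / (4 * \<alpha>) - 1)"
    using assms by (intro mult_left_mono) (simp_all add: ln_div ln_mult ln4)
  also have "\<dots> = (2 - 3 * \<alpha>) / 4"
    using assms by (simp add: field_simps)
  finally have first: "\<alpha> * ln (2 + \<alpha>) - 2 * \<alpha> * ln 2 - \<alpha> * ln \<alpha> \<le> (2 - 3 * \<alpha>) / 4"
    by (simp add: algebra_simps)
  have "ln (3 * (2 + \<alpha>) / 8) \<le> 3 * (2 + \<alpha>) / 8 - 1"
    using assms by (intro ln_le_minus_one) simp
  moreover have "ln (3 * (2 + \<alpha>) / 8) = ln 3 + ln (2 + \<alpha>) - 3 * ln 2"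
    using assms ln_mult[of 3 "2 + \<alpha>"] ln_div[of "3 * (2 + \<alpha>)" 8] ln8 by simp
  ultimately have second: "ln 3 + ln (2 + \<alpha>) - 3 * ln 2 \<le> 3 * (2 + \<alpha>) / 8 - 1"
    by simp
  have "ln (8::real) \<le> ln 9" by simp
  then have "3 * ln (2::real) \<le> 2 * ln 3"
    using ln8 ln_realpow[of 3 2] by simp
  with first second show ?thesis by (simp add: field_simps)
qed

lemma tradeoff_optimum_le:
  fixes \<sigma> K \<alpha> :: real
  assumes "0 < \<sigma>" and "0 < K" and "0 < \<alpha>"
  defines "\<epsilon> \<equiv> (8 * \<sigma> / (\<alpha>\<^sup>2 * K)) powr (1 / (2 + \<alpha>))"
  shows "2 * \<sigma> * (2 + \<alpha>) / (\<alpha> * \<epsilon>) \<le> (2 powr (2 + 3 * \<alpha>) * K * \<sigma> powr (1 + \<alpha>)) powr (1 / (2 + \<alpha>))"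
    (is "?V \<le> ?R")
proof -
  have "\<epsilon> > 0" "?V > 0" "?R > 0"
    using assms by (simp_all add: \<epsilon>_def)
  have ln_eps: "(2 + \<alpha>) * ln \<epsilon> = 3 * ln 2 + ln \<sigma> - 2 * ln \<alpha> - ln K"
    unfolding \<epsilon>_def using assms ln_realpow[of 2 3] by (simp add: ln_div ln_mult ln_realpow)
  have ln_V: "ln ?V = ln 2 + ln \<sigma> + ln (2 + \<alpha>) - ln \<alpha> - ln \<epsilon>"
    using assms \<open>\<epsilon> > 0\<close> by (simp add: ln_div ln_mult)
  have "(2 + \<alpha>) * ln ?V = (2 + \<alpha>) * (ln 2 + ln \<sigma> + ln (2 + \<alpha>) - ln \<alpha>) - (2 + \<alpha>) * ln \<epsilon>"
    unfolding ln_V by (simp add: algebra_simps)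
  also have "\<dots> \<le> (2 + 3 * \<alpha>) * ln 2 + ln K + (1 + \<alpha>) * ln \<sigma>"
    unfolding ln_eps using two_plus_ln_bound[OF \<open>0 < \<alpha>\<close>] by (simp add: algebra_simps)
  also have "\<dots> = (2 + \<alpha>) * ln ?R"
    using assms by (simp add: ln_mult ln_powr)
  finally have "ln ?V \<le> ln ?R"
    by (rule mult_left_le_imp_le) (use \<open>0 < \<alpha>\<close> in simp)
  then show ?thesis
    using \<open>?V > 0\<close> \<open>?R > 0\<close> ln_le_cancel_iff by blast
qed

lemma le_tradeoff_optimum:
  fixes E \<sigma> K \<alpha> :: real
  assumes "0 \<le> \<sigma>" and "0 < K" and "0 < \<alpha>"
    and tradeoff: "\<And>\<epsilon> \<eta>. 0 < \<epsilon> \<Longrightarrow> 0 < \<eta> \<Longrightarrow> E \<le> \<eta> * \<sigma> + K * \<epsilon> powr \<alpha> / (2 * \<eta>) + 2 * \<sigma> / \<epsilon>"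
  shows "E \<le> (2 powr (2 + 3 * \<alpha>) * K * \<sigma> powr (1 + \<alpha>)) powr (1 / (2 + \<alpha>))"
proof (cases "\<sigma> = 0")
  case True
  have "E \<le> 0"
  proof (rule ccontr)
    assume "\<not> E \<le> 0"
    then have "E \<le> E / 2"
      using tradeoff[of 1 "K / E"] True \<open>0 < K\<close> by (simp add: field_simps)
    with \<open>\<not> E \<le> 0\<close> show False by simp
  qed
  then show ?thesis using True by simp
next
  case False
  then have "\<sigma> > 0" using \<open>0 \<le> \<sigma>\<close> by simp
  \<comment> \<open>the minimising choice of \<open>\<epsilon>\<close> and \<open>\<eta>\<close>\<close>
  define \<epsilon> where "\<epsilon> = (8 * \<sigma> / (\<alpha>\<^sup>2 * K)) powr (1 / (2 + \<alpha>))"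
  define \<eta> where "\<eta> = 2 / (\<alpha> * \<epsilon>)"
  have "\<epsilon> > 0" "\<eta> > 0"
    using \<open>\<sigma> > 0\<close> \<open>0 < K\<close> \<open>0 < \<alpha>\<close> by (simp_all add: \<epsilon>_def \<eta>_def)
  have "\<epsilon>\<^sup>2 * \<epsilon> powr \<alpha> = \<epsilon> powr (2 + \<alpha>)"
    using \<open>\<epsilon> > 0\<close> by (simp add: powr_add powr_numeral)
  also have "\<dots> = 8 * \<sigma> / (\<alpha>\<^sup>2 * K)"
    unfolding \<epsilon>_def using \<open>\<sigma> > 0\<close> \<open>0 < K\<close> \<open>0 < \<alpha>\<close> by (simp add: powr_powr)
  finally have K_eps: "K * \<epsilon> powr \<alpha> = 8 * \<sigma> / (\<alpha>\<^sup>2 * \<epsilon>\<^sup>2)"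
    using \<open>\<epsilon> > 0\<close> \<open>0 < K\<close> \<open>0 < \<alpha>\<close> by (simp add: field_simps)
  have "E \<le> \<eta> * \<sigma> + K * \<epsilon> powr \<alpha> / (2 * \<eta>) + 2 * \<sigma> / \<epsilon>"
    using tradeoff \<open>\<epsilon> > 0\<close> \<open>\<eta> > 0\<close> by blast
  also have "\<dots> = 2 * \<sigma> * (2 + \<alpha>) / (\<alpha> * \<epsilon>)"
    unfolding \<eta>_def K_eps using \<open>0 < \<alpha>\<close> \<open>\<epsilon> > 0\<close> by (simp add: field_simps power2_eq_square)
  also have "\<dots> \<le> (2 powr (2 + 3 * \<alpha>) * K * \<sigma> powr (1 + \<alpha>)) powr (1 / (2 + \<alpha>))"
    unfolding \<epsilon>_def using \<open>\<sigma> > 0\<close> \<open>0 < K\<close> \<open>0 < \<alpha>\<close> by (rule tradeoff_optimum_le)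
  finally show ?thesis .
qed

lemma (in prob_space) sigma_finite_subalgebra_vimage_algebra:
  assumes "f \<in> M \<rightarrow>\<^sub>M N"
  shows "sigma_finite_subalgebra M (vimage_algebra (space M) f N)"
proof -
  have "finite_measure_subalgebra M (vimage_algebra (space M) f N)"
    unfolding finite_measure_subalgebra_def finite_measure_subalgebra_axioms_def subalgebra_def
    using finite_measure_axioms sets_image_in_sets[OF refl assms] by auto
  then show ?thesis by (rule finite_measure_subalgebra_is_sigma_finite)
qed

lemma measurable_case_prod_slice:
  assumes "case_prod f \<in> borel_measurable (N \<Otimes>\<^sub>M count_space UNIV)"
  shows "(\<lambda>x. f x b) \<in> borel_measurable N"
  using measurable_compose[OF measurable_Pair2'[of b "count_space UNIV"] assms] by simp

lemma integrable_power2_diff: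
  fixes f g :: "'w \<Rightarrow> real"
  assumes "f \<in> borel_measurable M" "g \<in> borel_measurable M"
    and "integrable M (\<lambda>\<omega>. (f \<omega>)\<^sup>2)" "integrable M (\<lambda>\<omega>. (g \<omega>)\<^sup>2)"
  shows "integrable M (\<lambda>\<omega>. (f \<omega> - g \<omega>)\<^sup>2)"
proof (rule Bochner_Integration.integrable_bound[of _ "\<lambda>\<omega>. 2 * (f \<omega>)\<^sup>2 + 2 * (g \<omega>)\<^sup>2"])
  show "integrable M (\<lambda>\<omega>. 2 * (f \<omega>)\<^sup>2 + 2 * (g \<omega>)\<^sup>2)"
    using assms(3,4) by simp
  have "(f \<omega> - g \<omega>)\<^sup>2 \<le> 2 * (f \<omega>)\<^sup>2 + 2 * (g \<omega>)\<^sup>2" for \<omega>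
    using zero_le_power2[of "f \<omega> + g \<omega>"] by (simp add: power2_eq_square algebra_simps)
  then show "AE \<omega> in M. norm ((f \<omega> - g \<omega>)\<^sup>2) \<le> norm (2 * (f \<omega>)\<^sup>2 + 2 * (g \<omega>)\<^sup>2)"
    by simp
qed (use assms(1,2) in measurable)

lemma sets_margin_gap_le:
  fixes f :: "'w \<Rightarrow> 'a::finite \<Rightarrow> real"
  assumes [measurable]: "\<And>b. (\<lambda>\<omega>. f \<omega> b) \<in> borel_measurable N"
  shows "{\<omega> \<in> space N. margin_gap (f \<omega>) \<le> ereal \<epsilon>} \<in> sets N"
proof -
  have [measurable]: "(\<lambda>\<omega>. Max (range (f \<omega>))) \<in> borel_measurable N"
    using borel_measurable_Max[of UNIV "\<lambda>b \<omega>. f \<omega> b" N] by simp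
  have "{\<omega> \<in> space N. margin_gap (f \<omega>) \<le> ereal \<epsilon>} =
      (\<Union>b. {\<omega> \<in> space N. f \<omega> b < Max (range (f \<omega>)) \<and> Max (range (f \<omega>)) - f \<omega> b \<le> \<epsilon>})"
    by (auto simp: margin_gap_le_iff)
  also have "\<dots> \<in> sets N"
    by measurable
  finally show ?thesis .
qed

lemma measure_margin_gap_diff_AE:
  fixes f g :: "'w \<Rightarrow> 'a::finite \<Rightarrow> real"
  assumes f_meas: "\<And>b. (\<lambda>\<omega>. f \<omega> b) \<in> borel_measurable M"
    and g_meas: "\<And>b. (\<lambda>\<omega>. g \<omega> b) \<in> borel_measurable M"
    and diff: "\<And>a. AE \<omega> in M. g \<omega> a = f \<omega> a - c \<omega>"
  shows "measure M {\<omega> \<in> space M. margin_gap (g \<omega>) \<le> ereal \<epsilon>}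
      = measure M {\<omega> \<in> space M. margin_gap (f \<omega>) \<le> ereal \<epsilon>}"
proof (rule measure_eq_AE)
  have "AE \<omega> in M. \<forall>a. g \<omega> a = f \<omega> a - c \<omega>"
    using diff by (simp add: AE_all_countable)
  then show "AE \<omega> in M. \<omega> \<in> {\<omega> \<in> space M. margin_gap (g \<omega>) \<le> ereal \<epsilon>}
      \<longleftrightarrow> \<omega> \<in> {\<omega> \<in> space M. margin_gap (f \<omega>) \<le> ereal \<epsilon>}"
  proof eventually_elim
    case (elim \<omega>)
    then have "g \<omega> = (\<lambda>a. f \<omega> a - c \<omega>)" by auto
    then show ?case by (simp add: margin_gap_diff_const)
  qed
qed (intro sets_margin_gap_le f_meas g_meas)+

locale propensity_model = prob_space M
  for M :: "'w measure" +
  fixes MX :: "'x measure" and X :: "'w \<Rightarrow> 'x" and A :: "'w \<Rightarrow> 'a::finite"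
    and ps :: "'x \<Rightarrow> 'a \<Rightarrow> real" and S :: real
  assumes X_meas [measurable]: "X \<in> M \<rightarrow>\<^sub>M MX"
    and A_meas [measurable]: "A \<in> M \<rightarrow>\<^sub>M count_space UNIV"
    and ps_meas [measurable]: "\<And>a. (\<lambda>x. ps x a) \<in> borel_measurable MX"
    and ps_cond_exp: "\<And>a. AE \<omega> in M. ps (X \<omega>) a =
          real_cond_exp M (vimage_algebra (space M) X MX) (\<lambda>\<omega>'. if A \<omega>' = a then 1 else 0) \<omega>"
    and S_pos: "S > 0"
    and overlap: "\<And>\<omega> a. \<omega> \<in> space M \<Longrightarrow> 1 / S \<le> ps (X \<omega>) a"
begin

lemma ps_pos: "\<omega> \<in> space M \<Longrightarrow> 0 < ps (X \<omega>) a"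
  using overlap[of \<omega> a] S_pos by (meson divide_pos_pos less_le_trans zero_less_one)

lemma integral_treatment_indicator:
  fixes h :: "'x \<Rightarrow> real"
  assumes h [measurable]: "h \<in> borel_measurable MX" and h_int: "integrable M (\<lambda>\<omega>. h (X \<omega>))"
  shows "integrable M (\<lambda>\<omega>. h (X \<omega>) * (if A \<omega> = a then 1 else 0))"
    and "integrable M (\<lambda>\<omega>. h (X \<omega>) * ps (X \<omega>) a)"
    and "(\<integral>\<omega>. h (X \<omega>) * (if A \<omega> = a then 1 else 0) \<partial>M) = (\<integral>\<omega>. h (X \<omega>) * ps (X \<omega>) a \<partial>M)"
proof -
  let ?F = "vimage_algebra (space M) X MX"
  interpret sigma_finite_subalgebra M ?F
    by (rule sigma_finite_subalgebra_vimage_algebra[OF X_meas])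
  have hF: "(\<lambda>\<omega>. h (X \<omega>)) \<in> borel_measurable ?F"
    by (rule measurable_compose[OF measurable_vimage_algebra1 h]) (auto intro: measurable_space[OF X_meas])
  show ind_int: "integrable M (\<lambda>\<omega>. h (X \<omega>) * (if A \<omega> = a then 1 else 0))"
    by (rule Bochner_Integration.integrable_bound[OF h_int]) auto
  note cond_exp = real_cond_exp_intg[OF ind_int hF, simplified]
  have "AE \<omega> in M. h (X \<omega>) * real_cond_exp M ?F (\<lambda>\<omega>'. if A \<omega>' = a then 1 else 0) \<omega>
      = h (X \<omega>) * ps (X \<omega>) a"
    using ps_cond_exp[of a] by eventually_elim simp
  from integrable_cong_AE_imp[OF cond_exp(1) _ this] integral_cong_AE[OF _ _ this] cond_exp(2)
  show "integrable M (\<lambda>\<omega>. h (X \<omega>) * ps (X \<omega>) a)"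
    and "(\<integral>\<omega>. h (X \<omega>) * (if A \<omega> = a then 1 else 0) \<partial>M) = (\<integral>\<omega>. h (X \<omega>) * ps (X \<omega>) a \<partial>M)"
    by auto
qed

lemma integral_le_S_treatment:
  fixes h :: "'x \<Rightarrow> real"
  assumes h: "h \<in> borel_measurable MX" and h_nonneg: "\<And>x. 0 \<le> h x"
    and h_int: "integrable M (\<lambda>\<omega>. h (X \<omega>))"
  shows "(\<integral>\<omega>. h (X \<omega>) \<partial>M) \<le> S * (\<integral>\<omega>. h (X \<omega>) * (if A \<omega> = a then 1 else 0) \<partial>M)"
proof -
  note treatment = integral_treatment_indicator[OF h h_int, of a]
  have "(\<integral>\<omega>. h (X \<omega>) \<partial>M) \<le> (\<integral>\<omega>. S * (h (X \<omega>) * ps (X \<omega>) a) \<partial>M)"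
  proof (rule integral_mono[OF h_int])
    show "integrable M (\<lambda>\<omega>. S * (h (X \<omega>) * ps (X \<omega>) a))"
      using treatment(2) by simp
    fix \<omega> assume "\<omega> \<in> space M"
    then have "h (X \<omega>) * 1 \<le> h (X \<omega>) * (S * ps (X \<omega>) a)"
      using overlap[of \<omega> a] S_pos h_nonneg by (intro mult_left_mono) (simp_all add: field_simps)
    then show "h (X \<omega>) \<le> S * (h (X \<omega>) * ps (X \<omega>) a)"
      by (simp add: mult_ac)
  qed
  also have "\<dots> = S * (\<integral>\<omega>. h (X \<omega>) * (if A \<omega> = a then 1 else 0) \<partial>M)"
    using treatment(3) by simp
  finally show ?thesis .
qed

lemma integrable_of_treatment_indicator:
  fixes h :: "'x \<Rightarrow> real"
  assumes h [measurable]: "h \<in> borel_measurable MX" and h_nonneg: "\<And>x. 0 \<le> h x"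
    and ind_int: "integrable M (\<lambda>\<omega>. h (X \<omega>) * (if A \<omega> = a then 1 else 0))"
  shows "integrable M (\<lambda>\<omega>. h (X \<omega>))"
proof -
  \<comment> \<open>monotone convergence for the truncations \<open>min h n\<close>, whose integrals are uniformly bounded\<close>
  define h' where "h' n x = min (h x) (real n)" for n x
  have h'_meas: "h' n \<in> borel_measurable MX" for n
    unfolding h'_def by measurable
  have h'_int: "integrable M (\<lambda>\<omega>. h' n (X \<omega>))" for n
    by (rule Bochner_Integration.integrable_bound[OF integrable_const[of "real n"]])
      (auto simp: h'_def h_nonneg)
  have bounded: "(\<integral>\<omega>. h' n (X \<omega>) \<partial>M) \<le> S * (\<integral>\<omega>. h (X \<omega>) * (if A \<omega> = a then 1 else 0) \<partial>M)" for n
  proof -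
    have "(\<integral>\<omega>. h' n (X \<omega>) \<partial>M) \<le> S * (\<integral>\<omega>. h' n (X \<omega>) * (if A \<omega> = a then 1 else 0) \<partial>M)"
      by (rule integral_le_S_treatment[OF h'_meas _ h'_int]) (simp add: h'_def h_nonneg)
    also have "\<dots> \<le> S * (\<integral>\<omega>. h (X \<omega>) * (if A \<omega> = a then 1 else 0) \<partial>M)"
      using S_pos integral_treatment_indicator(1)[OF h'_meas h'_int]
      by (intro mult_left_mono integral_mono ind_int) (auto simp: h'_def)
    finally show ?thesis .
  qed
  have "incseq (\<lambda>n. \<integral>\<omega>. h' n (X \<omega>) \<partial>M)"
    by (intro monoI integral_mono h'_int) (auto simp: h'_def)
  with bounded obtain L where L: "(\<lambda>n. \<integral>\<omega>. h' n (X \<omega>) \<partial>M) \<longlonglongrightarrow> L"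
    using incseq_convergent by blast
  show ?thesis
  proof (rule integrable_monotone_convergence[OF h'_int _ _ L])
    show "AE \<omega> in M. mono (\<lambda>n. h' n (X \<omega>))"
      by (auto simp: mono_def h'_def)
    show "AE \<omega> in M. (\<lambda>n. h' n (X \<omega>)) \<longlonglongrightarrow> h (X \<omega>)"
    proof (rule AE_I2)
      fix \<omega>
      obtain N where "h (X \<omega>) \<le> real N" using real_arch_simple by blast
      then have "\<forall>n\<ge>N. h' n (X \<omega>) = h (X \<omega>)" by (auto simp: h'_def)
      then show "(\<lambda>n. h' n (X \<omega>)) \<longlonglongrightarrow> h (X \<omega>)"
        by (intro tendsto_eventually) (auto simp: eventually_sequentially)
    qed
  qed measurable
qed

lemma
  fixes g :: "'x \<Rightarrow> 'a \<Rightarrow> real"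
  assumes g_meas: "case_prod g \<in> borel_measurable (MX \<Otimes>\<^sub>M count_space UNIV)"
    and g_nonneg: "\<And>x b. 0 \<le> g x b" and g_int: "integrable M (\<lambda>\<omega>. g (X \<omega>) (A \<omega>))"
  shows integrable_treatment_slice: "integrable M (\<lambda>\<omega>. g (X \<omega>) b)"
    and integral_sum_treatments_le:
      "(\<integral>\<omega>. (\<Sum>b\<in>UNIV. g (X \<omega>) b) \<partial>M) \<le> S * (\<integral>\<omega>. g (X \<omega>) (A \<omega>) \<partial>M)"
proof -
  have slice_meas [measurable]: "(\<lambda>x. g x b) \<in> borel_measurable MX" for b
    by (rule measurable_case_prod_slice[OF g_meas])
  have ind_int: "integrable M (\<lambda>\<omega>. g (X \<omega>) b * (if A \<omega> = b then 1 else 0))" for b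
    by (rule Bochner_Integration.integrable_bound[OF g_int]) (auto simp: g_nonneg)
  show slice_int: "integrable M (\<lambda>\<omega>. g (X \<omega>) b)" for b
    by (rule integrable_of_treatment_indicator[OF slice_meas g_nonneg ind_int])
  have "(\<integral>\<omega>. (\<Sum>b\<in>UNIV. g (X \<omega>) b) \<partial>M) = (\<Sum>b\<in>UNIV. \<integral>\<omega>. g (X \<omega>) b \<partial>M)"
    by (rule Bochner_Integration.integral_sum[OF slice_int])
  also have "\<dots> \<le> (\<Sum>b\<in>UNIV. S * (\<integral>\<omega>. g (X \<omega>) b * (if A \<omega> = b then 1 else 0) \<partial>M))"
    by (intro sum_mono integral_le_S_treatment slice_meas g_nonneg slice_int)
  also have "\<dots> = S * (\<integral>\<omega>. (\<Sum>b\<in>UNIV. g (X \<omega>) b * (if A \<omega> = b then 1 else 0)) \<partial>M)"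
    by (simp add: sum_distrib_left Bochner_Integration.integral_sum[OF ind_int])
  also have "\<dots> = S * (\<integral>\<omega>. g (X \<omega>) (A \<omega>) \<partial>M)"
    by (simp add: if_distrib sum.delta cong: if_cong)
  finally show "(\<integral>\<omega>. (\<Sum>b\<in>UNIV. g (X \<omega>) b) \<partial>M) \<le> S * (\<integral>\<omega>. g (X \<omega>) (A \<omega>) \<partial>M)" .
qed

lemma integral_treatment_sum:
  fixes g :: "'x \<Rightarrow> 'a \<Rightarrow> real"
  assumes slice_meas: "\<And>b. (\<lambda>x. g x b) \<in> borel_measurable MX"
    and slice_int: "\<And>b. integrable M (\<lambda>\<omega>. g (X \<omega>) b)"
  shows "(\<integral>\<omega>. g (X \<omega>) (A \<omega>) \<partial>M) = (\<integral>\<omega>. (\<Sum>b\<in>UNIV. g (X \<omega>) b * ps (X \<omega>) b) \<partial>M)"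
proof -
  note treatment = integral_treatment_indicator[OF slice_meas slice_int]
  have "(\<integral>\<omega>. g (X \<omega>) (A \<omega>) \<partial>M) = (\<integral>\<omega>. (\<Sum>b\<in>UNIV. g (X \<omega>) b * (if A \<omega> = b then 1 else 0)) \<partial>M)"
    by (simp add: if_distrib sum.delta cong: if_cong)
  also have "\<dots> = (\<Sum>b\<in>UNIV. \<integral>\<omega>. g (X \<omega>) b * ps (X \<omega>) b \<partial>M)"
    by (simp add: Bochner_Integration.integral_sum[OF treatment(1)] treatment(3))
  also have "\<dots> = (\<integral>\<omega>. (\<Sum>b\<in>UNIV. g (X \<omega>) b * ps (X \<omega>) b) \<partial>M)"
    by (rule Bochner_Integration.integral_sum[symmetric, OF treatment(2)])
  finally show ?thesis .
qed

end

locale outcome_model = propensity_model M MX X A ps S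
  for M :: "'w measure" and MX :: "'x measure" and X :: "'w \<Rightarrow> 'x" and A :: "'w \<Rightarrow> 'a::finite"
    and ps :: "'x \<Rightarrow> 'a \<Rightarrow> real" and S :: real +
  fixes Y :: "'w \<Rightarrow> real" and q0 :: "'x \<Rightarrow> 'a \<Rightarrow> real"
  assumes Y_int: "integrable M Y"
    and q0_meas: "case_prod q0 \<in> borel_measurable (MX \<Otimes>\<^sub>M count_space UNIV)"
    and q0_cond_exp: "AE \<omega> in M. q0 (X \<omega>) (A \<omega>) =
          real_cond_exp M (vimage_algebra (space M) (\<lambda>\<omega>'. (X \<omega>', A \<omega>')) (MX \<Otimes>\<^sub>M count_space UNIV)) Y \<omega>"
    and q0_sq: "integrable M (\<lambda>\<omega>. (q0 (X \<omega>) (A \<omega>))\<^sup>2)"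
begin

lemma q0_slice_meas [measurable]: "(\<lambda>x. q0 x b) \<in> borel_measurable MX"
  by (rule measurable_case_prod_slice[OF q0_meas])

lemma integrable_q0: "integrable M (\<lambda>\<omega>. q0 (X \<omega>) b)"
proof (rule square_integrable_imp_integrable)
  have "case_prod (\<lambda>x b. (q0 x b)\<^sup>2) \<in> borel_measurable (MX \<Otimes>\<^sub>M count_space UNIV)"
    using q0_meas by measurable
  then show "integrable M (\<lambda>\<omega>. (q0 (X \<omega>) b)\<^sup>2)"
    using integrable_treatment_slice[of "\<lambda>x b. (q0 x b)\<^sup>2"] q0_sq by simp
qed measurable

lemma integrable_q0_selection:
  assumes "g \<in> borel_measurable M" and "\<And>\<omega>. \<omega> \<in> space M \<Longrightarrow> \<exists>b. g \<omega> = q0 (X \<omega>) b"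
  shows "integrable M g"
proof (rule Bochner_Integration.integrable_bound[of _ "\<lambda>\<omega>. \<Sum>b\<in>UNIV. \<bar>q0 (X \<omega>) b\<bar>"])
  show "integrable M (\<lambda>\<omega>. \<Sum>b\<in>UNIV. \<bar>q0 (X \<omega>) b\<bar>)"
    using integrable_q0 by simp
  show "AE \<omega> in M. norm (g \<omega>) \<le> norm (\<Sum>b\<in>UNIV. \<bar>q0 (X \<omega>) b\<bar>)"
  proof (rule AE_I2)
    fix \<omega> assume "\<omega> \<in> space M"
    then obtain b where "g \<omega> = q0 (X \<omega>) b" using assms(2) by blast
    then show "norm (g \<omega>) \<le> norm (\<Sum>b\<in>UNIV. \<bar>q0 (X \<omega>) b\<bar>)"
      using member_le_sum[of b UNIV "\<lambda>b. \<bar>q0 (X \<omega>) b\<bar>"] by simp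
  qed
qed (rule assms(1))

lemma rule_value_eq:
  assumes d_meas [measurable]: "d \<in> MX \<rightarrow>\<^sub>M count_space UNIV"
  shows "rule_value M X A Y ps d = (\<integral>\<omega>. q0 (X \<omega>) (d (X \<omega>)) \<partial>M)"
proof -
  let ?G = "vimage_algebra (space M) (\<lambda>\<omega>. (X \<omega>, A \<omega>)) (MX \<Otimes>\<^sub>M count_space UNIV)"
  have XA: "(\<lambda>\<omega>. (X \<omega>, A \<omega>)) \<in> M \<rightarrow>\<^sub>M MX \<Otimes>\<^sub>M count_space UNIV"
    by measurable
  interpret G: sigma_finite_subalgebra M ?G
    by (rule sigma_finite_subalgebra_vimage_algebra[OF XA])
  have XA_G: "(\<lambda>\<omega>. (X \<omega>, A \<omega>)) \<in> ?G \<rightarrow>\<^sub>M MX \<Otimes>\<^sub>M count_space UNIV"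
    by (rule measurable_vimage_algebra1) (auto intro: measurable_space[OF XA])
  have [measurable]: "X \<in> ?G \<rightarrow>\<^sub>M MX" "A \<in> ?G \<rightarrow>\<^sub>M count_space UNIV"
    using measurable_compose[OF XA_G measurable_fst] measurable_compose[OF XA_G measurable_snd] by simp_all
  define ipw where "ipw x b = (if d x = b then 1 else 0) / ps x b" for x b
  have ipw_bound: "\<bar>ipw (X \<omega>) b\<bar> \<le> S" if "\<omega> \<in> space M" for \<omega> b
    using overlap[OF that, of b] ps_pos[OF that, of b] S_pos by (auto simp: ipw_def field_simps)
  have ipw_meas [measurable]: "(\<lambda>x. ipw x b) \<in> borel_measurable MX" for b
    unfolding ipw_def by measurable
  have ipw_G: "(\<lambda>\<omega>. ipw (X \<omega>) (A \<omega>)) \<in> borel_measurable ?G"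
    by (rule measurable_compose_countable[where f="\<lambda>b \<omega>. ipw (X \<omega>) b"]) measurable
  have ipw_Y_int: "integrable M (\<lambda>\<omega>. ipw (X \<omega>) (A \<omega>) * Y \<omega>)"
  proof (rule Bochner_Integration.integrable_bound[OF integrable_mult_right[OF Y_int, of S]])
    show "(\<lambda>\<omega>. ipw (X \<omega>) (A \<omega>) * Y \<omega>) \<in> borel_measurable M"
      using measurable_from_subalg[OF G.subalg ipw_G] Y_int by measurable
    show "AE \<omega> in M. norm (ipw (X \<omega>) (A \<omega>) * Y \<omega>) \<le> norm (S * Y \<omega>)"
      using ipw_bound S_pos by (intro AE_I2) (simp add: abs_mult mult_right_mono)
  qed
  have ipw_q0_int: "integrable M (\<lambda>\<omega>. ipw (X \<omega>) b * q0 (X \<omega>) b)" for b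
  proof (rule Bochner_Integration.integrable_bound[OF integrable_mult_right[OF integrable_q0, of S]])
    show "AE \<omega> in M. norm (ipw (X \<omega>) b * q0 (X \<omega>) b) \<le> norm (S * q0 (X \<omega>) b)"
      using ipw_bound S_pos by (intro AE_I2) (simp add: abs_mult mult_right_mono)
  qed measurable
  have "rule_value M X A Y ps d = (\<integral>\<omega>. ipw (X \<omega>) (A \<omega>) * Y \<omega> \<partial>M)"
    unfolding rule_value_def ipw_def by (simp add: mult.commute)
  also have "\<dots> = (\<integral>\<omega>. ipw (X \<omega>) (A \<omega>) * real_cond_exp M ?G Y \<omega> \<partial>M)"
    by (rule G.real_cond_exp_intg(2)[symmetric, OF ipw_Y_int ipw_G]) (use Y_int in measurable)
  also have "\<dots> = (\<integral>\<omega>. ipw (X \<omega>) (A \<omega>) * q0 (X \<omega>) (A \<omega>) \<partial>M)"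
    using q0_cond_exp measurable_from_subalg[OF G.subalg ipw_G]
    by (intro integral_cong_AE) (measurable, auto)
  also have "\<dots> = (\<integral>\<omega>. (\<Sum>b\<in>UNIV. ipw (X \<omega>) b * q0 (X \<omega>) b * ps (X \<omega>) b) \<partial>M)"
    by (rule integral_treatment_sum[of "\<lambda>x b. ipw x b * q0 x b"]) (measurable, rule ipw_q0_int)
  also have "\<dots> = (\<integral>\<omega>. q0 (X \<omega>) (d (X \<omega>)) \<partial>M)"
  proof (rule Bochner_Integration.integral_cong[OF refl])
    fix \<omega> assume "\<omega> \<in> space M"
    then have "ipw (X \<omega>) b * q0 (X \<omega>) b * ps (X \<omega>) b = (if d (X \<omega>) = b then q0 (X \<omega>) b else 0)" for b
      using ps_pos[of \<omega> b] by (simp add: ipw_def)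
    then show "(\<Sum>b\<in>UNIV. ipw (X \<omega>) b * q0 (X \<omega>) b * ps (X \<omega>) b) = q0 (X \<omega>) (d (X \<omega>))"
      by simp
  qed
  finally show ?thesis .
qed

lemma
  fixes Q :: "'x \<Rightarrow> 'a \<Rightarrow> real"
  assumes Q_meas: "case_prod Q \<in> borel_measurable (MX \<Otimes>\<^sub>M count_space UNIV)"
    and Q_sq: "integrable M (\<lambda>\<omega>. (Q (X \<omega>) (A \<omega>))\<^sup>2)"
  shows integrable_sum_sq_error: "integrable M (\<lambda>\<omega>. \<Sum>b\<in>UNIV. (Q (X \<omega>) b - q0 (X \<omega>) b)\<^sup>2)"
    and integral_sum_sq_error_le: "(\<integral>\<omega>. (\<Sum>b\<in>UNIV. (Q (X \<omega>) b - q0 (X \<omega>) b)\<^sup>2) \<partial>M)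
      \<le> S * (\<integral>\<omega>. (Q (X \<omega>) (A \<omega>) - q0 (X \<omega>) (A \<omega>))\<^sup>2 \<partial>M)"
proof -
  have XA: "(\<lambda>\<omega>. (X \<omega>, A \<omega>)) \<in> M \<rightarrow>\<^sub>M MX \<Otimes>\<^sub>M count_space UNIV"
    by measurable
  have err_meas: "case_prod (\<lambda>x b. (Q x b - q0 x b)\<^sup>2) \<in> borel_measurable (MX \<Otimes>\<^sub>M count_space UNIV)"
    using Q_meas q0_meas by measurable
  have "integrable M (\<lambda>\<omega>. (Q (X \<omega>) (A \<omega>) - q0 (X \<omega>) (A \<omega>))\<^sup>2)"
    using measurable_compose[OF XA Q_meas] measurable_compose[OF XA q0_meas] Q_sq q0_sq
    by (intro integrable_power2_diff) simp_all
  note err = integrable_treatment_slice[OF err_meas zero_le_power2 this]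
    integral_sum_treatments_le[OF err_meas zero_le_power2 this]
  show "integrable M (\<lambda>\<omega>. \<Sum>b\<in>UNIV. (Q (X \<omega>) b - q0 (X \<omega>) b)\<^sup>2)"
    by (intro Bochner_Integration.integrable_sum err(1))
  show "(\<integral>\<omega>. (\<Sum>b\<in>UNIV. (Q (X \<omega>) b - q0 (X \<omega>) b)\<^sup>2) \<partial>M)
      \<le> S * (\<integral>\<omega>. (Q (X \<omega>) (A \<omega>) - q0 (X \<omega>) (A \<omega>))\<^sup>2 \<partial>M)"
    using err(2) .
qed

lemma integrable_q0_rule:
  assumes "d \<in> MX \<rightarrow>\<^sub>M count_space UNIV"
  shows "integrable M (\<lambda>\<omega>. q0 (X \<omega>) (d (X \<omega>)))"
proof (rule integrable_q0_selection)
  have "(\<lambda>x. (x, d x)) \<in> MX \<rightarrow>\<^sub>M MX \<Otimes>\<^sub>M count_space UNIV"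
    using assms by measurable
  from measurable_compose[OF X_meas measurable_compose[OF this q0_meas]]
  show "(\<lambda>\<omega>. q0 (X \<omega>) (d (X \<omega>))) \<in> borel_measurable M"
    by simp
qed auto

lemma integrable_Max_q0: "integrable M (\<lambda>\<omega>. Max (range (q0 (X \<omega>))))"
proof (rule integrable_q0_selection)
  show "(\<lambda>\<omega>. Max (range (q0 (X \<omega>)))) \<in> borel_measurable M"
    using borel_measurable_Max[of UNIV "\<lambda>b \<omega>. q0 (X \<omega>) b" M]
    by (simp add: measurable_compose[OF X_meas q0_slice_meas])
  have "Max (range (q0 (X \<omega>))) \<in> range (q0 (X \<omega>))" for \<omega>
    by (intro Max_in) auto
  then show "\<exists>b. Max (range (q0 (X \<omega>))) = q0 (X \<omega>) b" for \<omega>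
    by (auto simp: image_iff)
qed

lemma rule_value_diff_le_integral_regret:
  assumes d'_meas: "d' \<in> MX \<rightarrow>\<^sub>M count_space UNIV" and d_meas: "d \<in> MX \<rightarrow>\<^sub>M count_space UNIV"
  shows "rule_value M X A Y ps d' - rule_value M X A Y ps d
      \<le> (\<integral>\<omega>. Max (range (q0 (X \<omega>))) - q0 (X \<omega>) (d (X \<omega>)) \<partial>M)"
proof -
  have "rule_value M X A Y ps d' \<le> (\<integral>\<omega>. Max (range (q0 (X \<omega>))) \<partial>M)"
    unfolding rule_value_eq[OF d'_meas]
    by (intro integral_mono integrable_q0_rule[OF d'_meas] integrable_Max_q0) simp
  then show ?thesis
    unfolding rule_value_eq[OF d_meas] using integrable_Max_q0 integrable_q0_rule[OF d_meas] by simp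
qed

lemma rule_value_diff_le_tradeoff:
  fixes Q :: "'x \<Rightarrow> 'a \<Rightarrow> real" and d d' :: "'x \<Rightarrow> 'a"
  assumes d'_meas: "d' \<in> MX \<rightarrow>\<^sub>M count_space UNIV" and d_meas: "d \<in> MX \<rightarrow>\<^sub>M count_space UNIV"
    and Q_meas: "case_prod Q \<in> borel_measurable (MX \<Otimes>\<^sub>M count_space UNIV)"
    and Q_sq: "integrable M (\<lambda>\<omega>. (Q (X \<omega>) (A \<omega>))\<^sup>2)"
    and d_argmax: "AE \<omega> in M. d (X \<omega>) \<in> argmax_set (Q (X \<omega>))"
    and "\<epsilon> > 0" and "\<eta> > 0"
  shows "rule_value M X A Y ps d' - rule_value M X A Y ps d
      \<le> \<eta> * (S * (\<integral>\<omega>. (Q (X \<omega>) (A \<omega>) - q0 (X \<omega>) (A \<omega>))\<^sup>2 \<partial>M))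
        + measure M {\<omega> \<in> space M. margin_gap (q0 (X \<omega>)) \<le> ereal \<epsilon>} / (2 * \<eta>)
        + 2 * (S * (\<integral>\<omega>. (Q (X \<omega>) (A \<omega>) - q0 (X \<omega>) (A \<omega>))\<^sup>2 \<partial>M)) / \<epsilon>"
proof -
  define W where "W \<omega> = (\<Sum>b\<in>UNIV. (Q (X \<omega>) b - q0 (X \<omega>) b)\<^sup>2)" for \<omega>
  define B where "B = {\<omega> \<in> space M. margin_gap (q0 (X \<omega>)) \<le> ereal \<epsilon>}"
  note W_int = integrable_sum_sq_error[OF Q_meas Q_sq, folded W_def]
  have B_sets: "B \<in> sets M"
    unfolding B_def by (intro sets_margin_gap_le) measurable
  then have B_int: "integrable M (indicator B :: 'w \<Rightarrow> real)"
    by (intro integrable_real_indicator) (simp_all add: emeasure_eq_measure)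
  have "rule_value M X A Y ps d' - rule_value M X A Y ps d
      \<le> (\<integral>\<omega>. Max (range (q0 (X \<omega>))) - q0 (X \<omega>) (d (X \<omega>)) \<partial>M)"
    by (rule rule_value_diff_le_integral_regret[OF d'_meas d_meas])
  also have "\<dots> \<le> (\<integral>\<omega>. \<eta> * W \<omega> + indicator B \<omega> / (2 * \<eta>) + 2 * W \<omega> / \<epsilon> \<partial>M)"
  proof (rule integral_mono_AE)
    show "AE \<omega> in M. Max (range (q0 (X \<omega>))) - q0 (X \<omega>) (d (X \<omega>))
        \<le> \<eta> * W \<omega> + indicator B \<omega> / (2 * \<eta>) + 2 * W \<omega> / \<epsilon>"
      using d_argmax AE_space
    proof eventually_elim
      case (elim \<omega>)
      have "indicator B \<omega> = (if margin_gap (q0 (X \<omega>)) \<le> ereal \<epsilon> then 1 else (0::real))"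
        using elim(2) by (simp add: B_def)
      then show ?case
        using regret_le_margin_tradeoff[OF elim(1) \<open>\<epsilon> > 0\<close> \<open>\<eta> > 0\<close>, of "q0 (X \<omega>)"]
        by (simp add: W_def)
    qed
  qed (use integrable_Max_q0 integrable_q0_rule[OF d_meas] W_int B_int in auto)
  also have "\<dots> = \<eta> * (\<integral>\<omega>. W \<omega> \<partial>M) + measure M B / (2 * \<eta>) + 2 * (\<integral>\<omega>. W \<omega> \<partial>M) / \<epsilon>"
    using W_int B_int B_sets by (simp add: Int_absorb2 sets.sets_into_space)
  also have "\<dots> \<le> \<eta> * (S * (\<integral>\<omega>. (Q (X \<omega>) (A \<omega>) - q0 (X \<omega>) (A \<omega>))\<^sup>2 \<partial>M))
        + measure M B / (2 * \<eta>) + 2 * (S * (\<integral>\<omega>. (Q (X \<omega>) (A \<omega>) - q0 (X \<omega>) (A \<omega>))\<^sup>2 \<partial>M)) / \<epsilon>"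
    using integral_sum_sq_error_le[OF Q_meas Q_sq, folded W_def] \<open>\<epsilon> > 0\<close> \<open>\<eta> > 0\<close>
    by (intro add_mono mult_left_mono divide_right_mono) simp_all
  finally show ?thesis unfolding B_def .
qed

end

theorem lemma1:
  fixes M :: "'w measure"
    and Xs :: "(real ^ 'p) set"
    and X :: "'w \<Rightarrow> real ^ 'p"
    and A :: "'w \<Rightarrow> 'a::finite"
    and Y :: "'w \<Rightarrow> real"
    and ps :: "real ^ 'p \<Rightarrow> 'a \<Rightarrow> real"
    and q0 t0 Q :: "real ^ 'p \<Rightarrow> 'a \<Rightarrow> real"
    and d0 d :: "real ^ 'p \<Rightarrow> 'a"
    and S C \<alpha> :: real
  defines "MX \<equiv> restrict_space borel Xs"
  assumes P: "prob_space M"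
    and X_meas: "X \<in> M \<rightarrow>\<^sub>M MX"
    and X_range: "\<And>\<omega>. \<omega> \<in> space M \<Longrightarrow> X \<omega> \<in> Xs"
    and A_meas: "A \<in> M \<rightarrow>\<^sub>M count_space UNIV"
    and Y_meas: "Y \<in> borel_measurable M"
    and Y_int: "integrable M Y"
    \<comment> \<open>p(a|x) = P(A = a | X = x)\<close>
    and prop_meas: "\<And>a. (\<lambda>x. ps x a) \<in> borel_measurable MX"
    and prop_cond: "\<And>a. AE \<omega> in M. ps (X \<omega>) a =
          real_cond_exp M (vimage_algebra (space M) X MX)
            (\<lambda>\<omega>'. if A \<omega>' = a then 1 else 0) \<omega>"
    and S_pos: "S > 0"
    and positivity: "\<And>x a. x \<in> Xs \<Longrightarrow> ps x a \<ge> 1 / S"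
    \<comment> \<open>d0 is an optimal rule among all (measurable) rules\<close>
    and d0_meas: "d0 \<in> MX \<rightarrow>\<^sub>M count_space UNIV"
    and d0_opt: "\<And>d'. d' \<in> MX \<rightarrow>\<^sub>M count_space UNIV \<Longrightarrow>
          rule_value M X A Y ps d' \<le> rule_value M X A Y ps d0"
    \<comment> \<open>Q0(X,A) = E[Y | X, A], square integrable\<close>
    and q0_meas: "case_prod q0 \<in> borel_measurable (MX \<Otimes>\<^sub>M count_space UNIV)"
    and q0_cond: "AE \<omega> in M. q0 (X \<omega>) (A \<omega>) =
          real_cond_exp M
            (vimage_algebra (space M) (\<lambda>\<omega>'. (X \<omega>', A \<omega>')) (MX \<Otimes>\<^sub>M count_space UNIV)) Y \<omega>"
    and q0_sq: "integrable M (\<lambda>\<omega>. (q0 (X \<omega>) (A \<omega>))\<^sup>2)"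
    \<comment> \<open>T0(X,a) = Q0(X,a) - E[Q0(X,A) | X]\<close>
    and t0_meas: "case_prod t0 \<in> borel_measurable (MX \<Otimes>\<^sub>M count_space UNIV)"
    and t0_def: "\<And>a. AE \<omega> in M. t0 (X \<omega>) a = q0 (X \<omega>) a -
          real_cond_exp M (vimage_algebra (space M) X MX) (\<lambda>\<omega>'. q0 (X \<omega>') (A \<omega>')) \<omega>"
    \<comment> \<open>margin condition\<close>
    and C_pos: "C > 0" and alpha_pos: "\<alpha> > 0"
    and margin: "\<And>\<epsilon>. \<epsilon> > 0 \<Longrightarrow>
          measure M {\<omega> \<in> space M. margin_gap (t0 (X \<omega>)) \<le> ereal \<epsilon>} \<le> C * \<epsilon> powr \<alpha>"
    \<comment> \<open>the rule d and the square integrable Q with d(X) in argmax_a Q(X,a)\<close>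
    and d_meas: "d \<in> MX \<rightarrow>\<^sub>M count_space UNIV"
    and Q_meas: "case_prod Q \<in> borel_measurable (MX \<Otimes>\<^sub>M count_space UNIV)"
    and Q_sq: "integrable M (\<lambda>\<omega>. (Q (X \<omega>) (A \<omega>))\<^sup>2)"
    and d_argmax: "AE \<omega> in M. d (X \<omega>) \<in> argmax_set (Q (X \<omega>))"
  shows "rule_value M X A Y ps d0 - rule_value M X A Y ps d
           \<le> (2 powr (2 + 3 * \<alpha>) * S powr (1 + \<alpha>) * C) powr (1 / (2 + \<alpha>))
              * (\<integral>\<omega>. (Q (X \<omega>) (A \<omega>) - q0 (X \<omega>) (A \<omega>))\<^sup>2 \<partial>M) powr ((1 + \<alpha>) / (2 + \<alpha>))"
proof -
  interpret outcome_model M MX X A ps S Y q0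
    using P X_meas A_meas prop_meas prop_cond S_pos positivity X_range Y_int q0_meas q0_cond q0_sq
    by (simp add: outcome_model_def outcome_model_axioms_def propensity_model_def
        propensity_model_axioms_def)
  have margin_q0: "measure M {\<omega> \<in> space M. margin_gap (q0 (X \<omega>)) \<le> ereal \<epsilon>} \<le> C * \<epsilon> powr \<alpha>"
    if "\<epsilon> > 0" for \<epsilon>
  proof -
    have "(\<lambda>\<omega>. t0 (X \<omega>) b) \<in> borel_measurable M" for b
      by (rule measurable_compose[OF X_meas measurable_case_prod_slice[OF t0_meas]])
    from measure_margin_gap_diff_AE[where f = "\<lambda>\<omega>. q0 (X \<omega>)" and g = "\<lambda>\<omega>. t0 (X \<omega>)",
        OF measurable_compose[OF X_meas q0_slice_meas] this t0_def]
    show ?thesis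
      using margin[OF that] by simp
  qed
  define \<sigma> where "\<sigma> = S * (\<integral>\<omega>. (Q (X \<omega>) (A \<omega>) - q0 (X \<omega>) (A \<omega>))\<^sup>2 \<partial>M)"
  have "rule_value M X A Y ps d0 - rule_value M X A Y ps d
      \<le> (2 powr (2 + 3 * \<alpha>) * C * \<sigma> powr (1 + \<alpha>)) powr (1 / (2 + \<alpha>))"
  proof (rule le_tradeoff_optimum)
    show "0 \<le> \<sigma>" using S_pos by (simp add: \<sigma>_def)
    fix \<epsilon> \<eta> :: real assume "0 < \<epsilon>" "0 < \<eta>"
    then have "measure M {\<omega> \<in> space M. margin_gap (q0 (X \<omega>)) \<le> ereal \<epsilon>} / (2 * \<eta>)
        \<le> C * \<epsilon> powr \<alpha> / (2 * \<eta>)"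
      using margin_q0 by (simp add: divide_right_mono)
    with rule_value_diff_le_tradeoff[OF d0_meas d_meas Q_meas Q_sq d_argmax \<open>0 < \<epsilon>\<close> \<open>0 < \<eta>\<close>]
    show "rule_value M X A Y ps d0 - rule_value M X A Y ps d
        \<le> \<eta> * \<sigma> + C * \<epsilon> powr \<alpha> / (2 * \<eta>) + 2 * \<sigma> / \<epsilon>"
      unfolding \<sigma>_def by linarith
  qed (use C_pos alpha_pos in simp_all)
  also have "\<dots> = (2 powr (2 + 3 * \<alpha>) * S powr (1 + \<alpha>) * C) powr (1 / (2 + \<alpha>))
      * (\<integral>\<omega>. (Q (X \<omega>) (A \<omega>) - q0 (X \<omega>) (A \<omega>))\<^sup>2 \<partial>M) powr ((1 + \<alpha>) / (2 + \<alpha>))"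
    using S_pos alpha_pos by (simp add: \<sigma>_def powr_mult powr_powr mult_ac)
  finally show ?thesis .
qed

end
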